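(* Let $\lambda,\mu,\rho,\mathsf D>0$, $X=\mathbb R$, $Y=[-\frac12\mathsf D,\frac12\mathsf D]$, and let $\hat f=\hat f_1$, i.e. $\hat f(x,y)=f(x,\hat y)+\partial_y f(x,\hat y)(y-\hat y)$. 1. If $\mu\le\sqrt{\lambda\rho/2}$, then for $f=F_{1,-1,\lambda,\mu,\rho}$ there exist $\hat y\in Y$ and $x^*\in\mathbb R$ such that $\hat\varphi_{2\lambda}'(x^* )=0$ while $|\varphi_{2\lambda}'(x^* )|\ge\frac{\mu\mathsf D}{3}$. 2. If $\mu\ge\sqrt{\lambda\rho/2}$, then there exist $\bar\mu\le\mu$, $\bar\rho\le\rho$, $\hat y\in Y$ and $x^*\in\mathbb R$ such that, for $f=F_{1,1,\lambda,\bar\mu,\bar\rho}$, $\hat\varphi_{2\lambda}'(x^* )=0$ while $|\varphi_{2\lambda}'(x^* )|\ge\sqrt{\frac{\lambda\rho\mathsf D^2}{8}}$.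
   Context: For $k\in\mathbb N\cup\{0\}$, $s\in\{\pm1,0\}$, $\lambda>0$, $\mu\ge0$, $\rho\ge0$: $F_{k,s,\lambda,\mu,\rho}(x,y)=-\frac{\lambda x^2}{2}+\mu xy+\frac{s\rho|y|^{k+1}}{(k+1)!}$ on $\mathbb R\times\mathbb R$. Given $f$, $X,Y\subseteq\mathbb R$ and $\hat y\in Y$: $\varphi(x)=\max_{y\in Y}f(x,y)$, $\hat\varphi(x)=\max_{y\in Y}\hat f(x,y)$, and for a function $\phi$ on $X$, $\phi_{2\lambda}(x)=\min_{u\in X}\{\phi(u)+\lambda(u-x)^2\}$ (Moreau envelope with parameter $2\lambda$); $'$ denotes the derivative in $x$. *)

theory Defs
  imports "HOL-Analysis.Analysis"
begin

definition F :: "nat \<Rightarrow> real \<Rightarrow> real \<Rightarrow> real \<Rightarrow> real \<Rightarrow> real \<Rightarrow> real \<Rightarrow> real" where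
  "F k s lam mu rho x y =
     - (lam * x\<^sup>2 / 2) + mu * x * y + s * rho * \<bar>y\<bar> ^ (k + 1) / fact (k + 1)"

definition maxval :: "real set \<Rightarrow> (real \<Rightarrow> real \<Rightarrow> real) \<Rightarrow> real \<Rightarrow> real" where
  "maxval Y f x = (SUP y\<in>Y. f x y)"

text \<open>Moreau envelope phi_{2 lambda}(x) = min over u in X of phi(u) + lambda (u - x)^2.\<close>
definition moreau :: "real set \<Rightarrow> real \<Rightarrow> (real \<Rightarrow> real) \<Rightarrow> real \<Rightarrow> real" where
  "moreau X lam phi x = (INF u\<in>X. phi u + lam * (u - x)\<^sup>2)"

definition lin_model :: "(real \<Rightarrow> real \<Rightarrow> real) \<Rightarrow> real \<Rightarrow> real \<Rightarrow> real \<Rightarrow> real" where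
  "lin_model f yh x y = f x yh + deriv (\<lambda>t. f x t) yh * (y - yh)"

end

theory Submission
  imports Defs
begin

text \<open>If \<open>\<phi>\<close> lies above a concave quadratic \<open>q(u) = -\<lambda>u\<^sup>2/2 + a + bu\<close> and touches it
  at the proximal point \<open>u\<^sub>b\<close> of \<open>q\<close> at \<open>x\<close>, then the Moreau envelope of \<open>\<phi>\<close> is squeezed between
  the envelope of \<open>q\<close> (an explicit quadratic) and the parabola \<open>\<phi>(u\<^sub>b) + \<lambda>(u\<^sub>b - \<cdot>)\<^sup>2\<close>; both
  touch it at \<open>x\<close> with slope \<open>2\<lambda>(x - u\<^sub>b)\<close>, which is therefore its derivative there. For
  \<open>\<phi> = max\<^sub>y f(\<cdot>,y)\<close> one takes \<open>q = f(\<cdot>,y\<^sub>0)\<close> with \<open>y\<^sub>0\<close> a maximiser of \<open>f(u\<^sub>b,\<cdot>)\<close>.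
  For the linearised models the point \<open>x\<^sup>*\<close> is chosen so that \<open>u\<^sub>b = x\<^sup>*\<close>, i.e. \<open>x\<^sup>*\<close> is
  stationary, whereas for the true \<open>F\<^sub>1\<close> the proximal point of \<open>x\<^sup>*\<close> is at distance of order
  \<open>\<mu>D/\<lambda>\<close> from \<open>x\<^sup>*\<close> (concave case: the active maximiser lies inside \<open>Y\<close>; convex case: the
  proximal point is \<open>0\<close> and the maximiser an endpoint of \<open>Y\<close>).\<close>

lemma has_real_derivative_squeeze:
  fixes l g h :: "real \<Rightarrow> real"
  assumes lower: "\<And>x. l x \<le> g x" and upper: "\<And>x. g x \<le> h x" and touch: "l x0 = h x0"
    and l_deriv: "(l has_real_derivative d) (at x0)"
    and h_deriv: "(h has_real_derivative d) (at x0)"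
  shows "(g has_real_derivative d) (at x0)"
proof -
  define gap where "gap x = h x - l x" for x
  define e where "e x = g x - l x" for x
  have gap_x0: "gap x0 = 0" and e_x0: "e x0 = 0"
    using touch lower[of x0] upper[of x0] by (auto simp: gap_def e_def)
  have "(gap has_real_derivative 0) (at x0)"
    unfolding gap_def using DERIV_diff[OF h_deriv l_deriv] by simp
  then have "((\<lambda>y. (gap y - gap x0) / (y - x0)) \<longlongrightarrow> 0) (at x0)"
    by (simp add: has_field_derivative_iff)
  then have "((\<lambda>y. \<bar>(gap y - gap x0) / (y - x0)\<bar>) \<longlongrightarrow> 0) (at x0)"
    by (rule tendsto_rabs_zero)
  then have "((\<lambda>y. (e y - e x0) / (y - x0)) \<longlongrightarrow> 0) (at x0)"
  proof (rule Lim_null_comparison[rotated], intro always_eventually allI)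
    fix y
    have "0 \<le> e y" "e y \<le> gap y"
      using lower[of y] upper[of y] by (auto simp: e_def gap_def)
    then show "norm ((e y - e x0) / (y - x0)) \<le> \<bar>(gap y - gap x0) / (y - x0)\<bar>"
      using e_x0 gap_x0 by (simp add: abs_divide divide_right_mono)
  qed
  then have "(e has_real_derivative 0) (at x0)"
    by (simp add: has_field_derivative_iff)
  from DERIV_add[OF l_deriv this] show ?thesis
    by (simp add: e_def)
qed

lemma moreau_has_real_derivative_touching_quadratic:
  fixes \<phi> :: "real \<Rightarrow> real"
  assumes lam: "lam > 0"
    and above: "\<And>u. - lam * u\<^sup>2 / 2 + a + b * u \<le> \<phi> u"
    and touch: "\<phi> ub = - lam * ub\<^sup>2 / 2 + a + b * ub"
    and prox: "lam * ub = 2 * lam * x0 - b"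
  shows "(moreau UNIV lam \<phi> has_real_derivative 2 * lam * (x0 - ub)) (at x0)"
proof (rule has_real_derivative_squeeze)
  define l where "l x = lam * x\<^sup>2 + a - (2 * lam * x - b)\<^sup>2 / (2 * lam)" for x
  define h where "h x = \<phi> ub + lam * (ub - x)\<^sup>2" for x
  have l_le: "l x \<le> \<phi> u + lam * (u - x)\<^sup>2" for u x
  proof -
    have "- lam * u\<^sup>2 / 2 + a + b * u + lam * (u - x)\<^sup>2 - l x = (lam * u + b - 2 * lam * x)\<^sup>2 / (2 * lam)"
      using lam by (simp add: l_def field_simps power2_eq_square)
    also have "\<dots> \<ge> 0"
      using lam by simp
    finally show ?thesis
      using above[of u] by linarith
  qed
  show "l x \<le> moreau UNIV lam \<phi> x" for x
    unfolding moreau_def by (rule cINF_greatest) (auto intro: l_le)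
  show "moreau UNIV lam \<phi> x \<le> h x" for x
    unfolding moreau_def h_def using l_le by (intro cINF_lower bdd_belowI2) auto
  have b: "b = 2 * lam * x0 - lam * ub"
    using prox by simp
  show "l x0 = h x0"
    using lam unfolding l_def h_def touch b by (simp add: field_simps power2_eq_square)
  show "(l has_real_derivative 2 * lam * (x0 - ub)) (at x0)"
    unfolding l_def b using lam
    by (auto intro!: derivative_eq_intros simp: field_simps power2_eq_square)
  show "(h has_real_derivative 2 * lam * (x0 - ub)) (at x0)"
    unfolding h_def by (auto intro!: derivative_eq_intros simp: algebra_simps)
qed

lemma maxval_ge:
  assumes "y \<in> Y" and "bdd_above (f x ` Y)"
  shows "f x y \<le> maxval Y f x"
  unfolding maxval_def using assms by (rule cSUP_upper)

lemma maxval_eq_maximum: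
  assumes "yb \<in> Y" and "\<And>y. y \<in> Y \<Longrightarrow> f x y \<le> f x yb"
  shows "maxval Y f x = f x yb"
  unfolding maxval_def using assms by (intro cSup_eq_maximum) auto

lemma moreau_maxval_has_real_derivative:
  assumes lam: "lam > 0" and yb: "yb \<in> Y" and bdd: "\<And>x. bdd_above (f x ` Y)"
    and piece: "\<And>u. f u yb = - lam * u\<^sup>2 / 2 + a + b * u"
    and active: "\<And>y. y \<in> Y \<Longrightarrow> f ub y \<le> f ub yb"
    and prox: "lam * ub = 2 * lam * x0 - b"
  shows "(moreau UNIV lam (maxval Y f) has_real_derivative 2 * lam * (x0 - ub)) (at x0)"
proof (rule moreau_has_real_derivative_touching_quadratic[OF lam _ _ prox])
  show "- lam * u\<^sup>2 / 2 + a + b * u \<le> maxval Y f u" for u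
    using maxval_ge[OF yb bdd] by (simp add: piece)
  show "maxval Y f ub = - lam * ub\<^sup>2 / 2 + a + b * ub"
    using maxval_eq_maximum[of yb Y f ub, OF yb active] by (simp add: piece)
qed

lemma bdd_above_continuous_image_Icc:
  fixes g :: "real \<Rightarrow> real"
  assumes "continuous_on {c..d} g"
  shows "bdd_above (g ` {c..d})"
  using assms by (intro bounded_imp_bdd_above compact_imp_bounded compact_continuous_image compact_Icc)

lemma continuous_on_F: "continuous_on S (F k s lam m r x)"
  unfolding F_def [abs_def] by (intro continuous_intros) auto

lemma continuous_on_lin_model: "continuous_on S (lin_model f yh x)"
  unfolding lin_model_def [abs_def] by (intro continuous_intros)

text \<open>The simplifier rewrites \<open>F 1\<close> to \<open>F (Suc 0)\<close>, so the next two equations are applied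
  by unfolding before simplification.\<close>

lemma F_1_eq: "F 1 s lam m r x y = - (lam * x\<^sup>2 / 2) + m * x * y + s * r * y\<^sup>2 / 2"
  by (simp add: F_def numeral_2_eq_2 [symmetric])

lemma lin_model_F_1_eq:
  "lin_model (F 1 s lam m r) yh x y = F 1 s lam m r x yh + (m * x + s * r * yh) * (y - yh)"
proof -
  have "((\<lambda>t. F 1 s lam m r x t) has_real_derivative m * x + s * r * yh) (at yh)"
    unfolding F_1_eq by (auto intro!: derivative_eq_intros)
  then show ?thesis
    unfolding lin_model_def by (simp add: DERIV_imp_deriv)
qed

lemma moreau_maxval_lin_model_F_1_at_0_has_real_derivative_0:
  assumes lam: "lam > 0" and "m \<ge> 0" and "D \<ge> 0"
  shows "(moreau UNIV lam (maxval {- D / 2 .. D / 2} (lin_model (F 1 s lam m r) 0))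
            has_real_derivative 0) (at (- D * m / (2 * lam)))"
proof -
  define x0 where "x0 = - D * m / (2 * lam)"
  have "m * x0 \<le> 0"
    using assms by (simp add: x0_def mult_nonneg_nonneg)
  then have active: "m * x0 * y \<le> m * x0 * (- D / 2)" if "y \<in> {- D / 2 .. D / 2}" for y
    using that by (intro mult_left_mono_neg) auto
  have "(moreau UNIV lam (maxval {- D / 2 .. D / 2} (lin_model (F 1 s lam m r) 0))
          has_real_derivative 2 * lam * (x0 - x0)) (at x0)"
  proof (rule moreau_maxval_has_real_derivative[where yb = "- D / 2" and a = 0 and b = "- m * D / 2"])
    show "- D / 2 \<in> {- D / 2 .. D / 2}"
      using assms by simp
    show "bdd_above (lin_model (F 1 s lam m r) 0 x ` {- D / 2 .. D / 2})" for x
      by (intro bdd_above_continuous_image_Icc continuous_on_lin_model)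
    show "lin_model (F 1 s lam m r) 0 u (- D / 2) = - lam * u\<^sup>2 / 2 + 0 + - m * D / 2 * u" for u
      unfolding lin_model_F_1_eq F_1_eq by (simp add: algebra_simps)
    show "lin_model (F 1 s lam m r) 0 x0 y \<le> lin_model (F 1 s lam m r) 0 x0 (- D / 2)"
      if "y \<in> {- D / 2 .. D / 2}" for y
      using active[OF that] unfolding lin_model_F_1_eq F_1_eq by simp
    show "lam * x0 = 2 * lam * x0 - - m * D / 2"
      using lam by (simp add: x0_def field_simps)
  qed (rule lam)
  then show ?thesis
    by (simp add: x0_def)
qed

lemma moreau_maxval_F_1_concave_has_real_derivative:
  assumes lam: "lam > 0" and rho: "rho > 0" and "D \<ge> 0" and mu_sq: "mu\<^sup>2 \<le> lam * rho"
  shows "(moreau UNIV lam (maxval {- D / 2 .. D / 2} (F 1 (-1) lam mu rho))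
            has_real_derivative D * mu * (lam * rho - mu\<^sup>2) / (lam * rho + mu\<^sup>2)) (at (- D * mu / (2 * lam)))"
proof -
  define s where "s = lam * rho + mu\<^sup>2"
  have s_pos: "s > 0"
    using lam rho by (simp add: s_def add_pos_nonneg)
  define x0 where "x0 = - D * mu / (2 * lam)"
  \<comment> \<open>\<open>y0 = \<mu> ub / \<rho>\<close> is the unconstrained maximiser of \<open>F(ub,\<cdot>)\<close>, and \<open>ub\<close> the proximal point of
    \<open>x0\<close> for the piece \<open>F(\<cdot>,y0)\<close>; solving both equations together gives:\<close>
  define ub where "ub = - D * mu * rho / s"
  define y0 where "y0 = - D * mu\<^sup>2 / s"
  have y0_mem: "y0 \<in> {- D / 2 .. D / 2}"
  proof -
    have "D * (2 * mu\<^sup>2) \<le> D * s"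
      using mu_sq \<open>D \<ge> 0\<close> by (intro mult_left_mono) (auto simp: s_def)
    then show ?thesis
      using s_pos \<open>D \<ge> 0\<close> by (auto simp: y0_def field_simps intro: order_trans [rotated])
  qed
  have mu_ub: "mu * ub = rho * y0"
    by (simp add: ub_def y0_def power2_eq_square)
  have deriv: "(moreau UNIV lam (maxval {- D / 2 .. D / 2} (F 1 (-1) lam mu rho))
          has_real_derivative 2 * lam * (x0 - ub)) (at x0)"
  proof (rule moreau_maxval_has_real_derivative[OF lam y0_mem, where a = "- rho * y0\<^sup>2 / 2" and b = "mu * y0"])
    show "bdd_above (F 1 (-1) lam mu rho x ` {- D / 2 .. D / 2})" for x
      by (intro bdd_above_continuous_image_Icc continuous_on_F)
    show "F 1 (-1) lam mu rho u y0 = - lam * u\<^sup>2 / 2 + - rho * y0\<^sup>2 / 2 + mu * y0 * u" for u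
      unfolding F_1_eq by (simp add: algebra_simps)
    show "F 1 (-1) lam mu rho ub y \<le> F 1 (-1) lam mu rho ub y0" for y
    proof -
      have "0 \<le> rho * (y - y0)\<^sup>2"
        using rho by simp
      then show ?thesis
        unfolding F_1_eq by (simp add: mu_ub power2_eq_square algebra_simps)
    qed
    have "lam * ub = - D * mu * (s - mu\<^sup>2) / s"
      by (simp add: ub_def s_def)
    also have "\<dots> = 2 * lam * x0 - mu * y0"
      using s_pos lam by (simp add: x0_def y0_def field_simps power2_eq_square)
    finally show "lam * ub = 2 * lam * x0 - mu * y0" .
  qed
  have "2 * lam * (x0 - ub) = D * mu * (2 * (lam * rho) - s) / s"
    using s_pos lam by (simp add: ub_def x0_def field_simps)
  also have "\<dots> = D * mu * (lam * rho - mu\<^sup>2) / s"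
    by (simp add: s_def)
  finally show ?thesis
    using deriv by (simp add: x0_def s_def)
qed

lemma moreau_maxval_lin_model_F_1_convex_has_real_derivative_0:
  assumes lam: "lam > 0" and "D \<ge> 0" and m_sq: "m\<^sup>2 = 2 * lam * r"
  shows "(moreau UNIV lam (maxval {- D / 2 .. D / 2} (lin_model (F 1 1 lam m r) (D / 2)))
            has_real_derivative 0) (at (- m * D / (4 * lam)))"
proof -
  define x0 where "x0 = - m * D / (4 * lam)"
  \<comment> \<open>At \<open>x0\<close> the linear model is constant in \<open>y\<close>, so every \<open>y\<close> is a maximiser; \<open>- D / 4\<close> is
    the one whose piece has \<open>x0\<close> as its own proximal point.\<close>
  have flat: "m * x0 + r * (D / 2) = 0"
    using lam by (simp add: x0_def power2_eq_square [symmetric] m_sq field_simps)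
  have "(moreau UNIV lam (maxval {- D / 2 .. D / 2} (lin_model (F 1 1 lam m r) (D / 2)))
          has_real_derivative 2 * lam * (x0 - x0)) (at x0)"
  proof (rule moreau_maxval_has_real_derivative[where yb = "- D / 4" and a = "- r * D\<^sup>2 / 4" and b = "- m * D / 4"])
    show "- D / 4 \<in> {- D / 2 .. D / 2}"
      using \<open>D \<ge> 0\<close> by simp
    show "bdd_above (lin_model (F 1 1 lam m r) (D / 2) x ` {- D / 2 .. D / 2})" for x
      by (intro bdd_above_continuous_image_Icc continuous_on_lin_model)
    show "lin_model (F 1 1 lam m r) (D / 2) u (- D / 4) = - lam * u\<^sup>2 / 2 + - r * D\<^sup>2 / 4 + - m * D / 4 * u" for u
      unfolding lin_model_F_1_eq F_1_eq by (simp add: algebra_simps power2_eq_square)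
    show "lin_model (F 1 1 lam m r) (D / 2) x0 y \<le> lin_model (F 1 1 lam m r) (D / 2) x0 (- D / 4)" for y
      unfolding lin_model_F_1_eq using flat by simp
    show "lam * x0 = 2 * lam * x0 - - m * D / 4"
      using lam by (simp add: x0_def field_simps)
  qed (rule lam)
  then show ?thesis
    by (simp add: x0_def)
qed

lemma moreau_maxval_F_1_convex_has_real_derivative:
  assumes lam: "lam > 0" and "D \<ge> 0" and "r \<ge> 0"
  shows "(moreau UNIV lam (maxval {- D / 2 .. D / 2} (F 1 1 lam m r))
            has_real_derivative - (m * D / 2)) (at (- m * D / (4 * lam)))"
proof -
  define x0 where "x0 = - m * D / (4 * lam)"
  have "(moreau UNIV lam (maxval {- D / 2 .. D / 2} (F 1 1 lam m r))
          has_real_derivative 2 * lam * (x0 - 0)) (at x0)"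
  proof (rule moreau_maxval_has_real_derivative[where yb = "- D / 2" and a = "r * D\<^sup>2 / 8" and b = "- m * D / 2"])
    show "- D / 2 \<in> {- D / 2 .. D / 2}"
      using \<open>D \<ge> 0\<close> by simp
    show "bdd_above (F 1 1 lam m r x ` {- D / 2 .. D / 2})" for x
      by (intro bdd_above_continuous_image_Icc continuous_on_F)
    show "F 1 1 lam m r u (- D / 2) = - lam * u\<^sup>2 / 2 + r * D\<^sup>2 / 8 + - m * D / 2 * u" for u
      unfolding F_1_eq by (simp add: algebra_simps power2_eq_square)
    show "F 1 1 lam m r 0 y \<le> F 1 1 lam m r 0 (- D / 2)" if "y \<in> {- D / 2 .. D / 2}" for y
    proof -
      have "y\<^sup>2 \<le> (D / 2)\<^sup>2"
        using that by (intro power2_le_iff_abs_le [THEN iffD2]) auto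
      then show ?thesis
        using \<open>r \<ge> 0\<close> unfolding F_1_eq by (simp add: mult_left_mono)
    qed
    show "lam * 0 = 2 * lam * x0 - - m * D / 2"
      using lam by (simp add: x0_def field_simps)
  qed (use lam in simp)
  then show ?thesis
    using lam by (simp add: x0_def mult.commute)
qed

lemma linearization_gap_F_1_concave:
  fixes lam mu rho D :: real
  assumes "lam > 0" and "mu > 0" and "rho > 0" and "D > 0" and mu_le: "mu \<le> sqrt (lam * rho / 2)"
  shows "\<exists>yh \<in> {- D / 2 .. D / 2}. \<exists>x0.
           (moreau UNIV lam (maxval {- D / 2 .. D / 2} (lin_model (F 1 (-1) lam mu rho) yh))
              has_real_derivative 0) (at x0) \<and>
           (\<exists>d. (moreau UNIV lam (maxval {- D / 2 .. D / 2} (F 1 (-1) lam mu rho))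
              has_real_derivative d) (at x0) \<and> mu * D / 3 \<le> \<bar>d\<bar>)"
proof -
  define x0 where "x0 = - D * mu / (2 * lam)"
  define d where "d = D * mu * (lam * rho - mu\<^sup>2) / (lam * rho + mu\<^sup>2)"
  have "sqrt (mu\<^sup>2) \<le> sqrt (lam * rho / 2)"
    using mu_le \<open>mu > 0\<close> by simp
  then have mu_sq: "2 * mu\<^sup>2 \<le> lam * rho"
    by (simp only: real_sqrt_le_iff)
  have hat: "(moreau UNIV lam (maxval {- D / 2 .. D / 2} (lin_model (F 1 (-1) lam mu rho) 0))
               has_real_derivative 0) (at x0)"
    unfolding x0_def using assms by (intro moreau_maxval_lin_model_F_1_at_0_has_real_derivative_0) auto
  have true: "(moreau UNIV lam (maxval {- D / 2 .. D / 2} (F 1 (-1) lam mu rho))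
                has_real_derivative d) (at x0)"
    unfolding x0_def d_def using assms mu_sq
    by (intro moreau_maxval_F_1_concave_has_real_derivative) (auto intro: order_trans [rotated])
  have "mu * D * (lam * rho + mu\<^sup>2) \<le> mu * D * (3 * (lam * rho - mu\<^sup>2))"
    using mu_sq assms by (intro mult_left_mono) auto
  then have "mu * D / 3 \<le> d"
    using assms by (simp add: d_def field_simps add_pos_nonneg)
  then have "mu * D / 3 \<le> \<bar>d\<bar>"
    by linarith
  moreover have "0 \<in> {- D / 2 .. D / 2}"
    using assms by simp
  ultimately show ?thesis
    using hat true by blast
qed

lemma linearization_gap_F_1_convex:
  fixes lam mu rho D :: real
  assumes "lam > 0" and "rho > 0" and "D > 0" and "sqrt (lam * rho / 2) \<le> mu"
  shows "\<exists>mub rhob. 0 \<le> mub \<and> mub \<le> mu \<and> 0 \<le> rhob \<and> rhob \<le> rho \<and>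
           (\<exists>yh \<in> {- D / 2 .. D / 2}. \<exists>x0.
             (moreau UNIV lam (maxval {- D / 2 .. D / 2} (lin_model (F 1 1 lam mub rhob) yh))
                has_real_derivative 0) (at x0) \<and>
             (\<exists>d. (moreau UNIV lam (maxval {- D / 2 .. D / 2} (F 1 1 lam mub rhob))
                has_real_derivative d) (at x0) \<and> sqrt (lam * rho * D\<^sup>2 / 8) \<le> \<bar>d\<bar>))"
proof -
  define m where "m = sqrt (lam * rho / 2)"
  define x0 where "x0 = - m * D / (4 * lam)"
  have m_sq: "m\<^sup>2 = lam * rho / 2"
    using assms by (simp add: m_def)
  have hat: "(moreau UNIV lam (maxval {- D / 2 .. D / 2} (lin_model (F 1 1 lam m (rho / 4)) (D / 2)))
               has_real_derivative 0) (at x0)"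
    unfolding x0_def using assms m_sq
    by (intro moreau_maxval_lin_model_F_1_convex_has_real_derivative_0) simp_all
  have true: "(moreau UNIV lam (maxval {- D / 2 .. D / 2} (F 1 1 lam m (rho / 4)))
                has_real_derivative - (m * D / 2)) (at x0)"
    unfolding x0_def using assms by (intro moreau_maxval_F_1_convex_has_real_derivative) simp_all
  have "sqrt (lam * rho * D\<^sup>2 / 8) = sqrt ((m * D / 2)\<^sup>2)"
    using m_sq by (simp add: power_mult_distrib field_simps)
  then have "sqrt (lam * rho * D\<^sup>2 / 8) \<le> \<bar>- (m * D / 2)\<bar>"
    by simp
  moreover have "0 \<le> m" "m \<le> mu" "0 \<le> rho / 4" "rho / 4 \<le> rho" "D / 2 \<in> {- D / 2 .. D / 2}"
    using assms by (auto simp: m_def)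
  ultimately show ?thesis
    using hat true by blast
qed

theorem proposition4:
  fixes lam mu rho D :: real
  assumes "lam > 0" and "mu > 0" and "rho > 0" and "D > 0"
  defines "Y \<equiv> {- D / 2 .. D / 2}"
  shows
   "(mu \<le> sqrt (lam * rho / 2) \<longrightarrow>
      (let f = F 1 (-1) lam mu rho in
       \<exists>yh \<in> Y. \<exists>xs :: real.
         ((moreau UNIV lam (maxval Y (lin_model f yh))) has_real_derivative 0) (at xs) \<and>
         (\<exists>d. ((moreau UNIV lam (maxval Y f)) has_real_derivative d) (at xs) \<and>
              \<bar>d\<bar> \<ge> mu * D / 3)))
    \<and>
    (mu \<ge> sqrt (lam * rho / 2) \<longrightarrow>
      (\<exists>mub rhob. 0 \<le> mub \<and> mub \<le> mu \<and> 0 \<le> rhob \<and> rhob \<le> rho \<and>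
       (let f = F 1 1 lam mub rhob in
       \<exists>yh \<in> Y. \<exists>xs :: real.
         ((moreau UNIV lam (maxval Y (lin_model f yh))) has_real_derivative 0) (at xs) \<and>
         (\<exists>d. ((moreau UNIV lam (maxval Y f)) has_real_derivative d) (at xs) \<and>
              \<bar>d\<bar> \<ge> sqrt (lam * rho * D\<^sup>2 / 8)))))"
  unfolding Let_def Y_def using assms
  by (intro conjI impI linearization_gap_F_1_concave linearization_gap_F_1_convex) simp_all

end
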